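(* Let $v$ be a scalar-valued function on an open set $\Omega\subseteq\mathbb{R}^n$ ($n>1$) and let $f$ be a differentiable $\mathbb{C}_n$-valued function on $\Omega$. Then the identity \[(-\Delta_n - v I)\phi = \left(\partial_{\underline{x}} + M^f\right)\left(\partial_{\underline{x}} - M^f\right)\phi\] holds for all (twice differentiable) scalar-valued functions $\phi$ on $\Omega$, where $I$ is the identity operator, if and only if \[\partial_{\underline{x}} f + f^2 = v .\]
   Context: $\mathbb{R}_{0,n}$ is the real Clifford algebra generated by an orthonormal basis $e_1,\dots,e_n$ of $\mathbb{R}^n$ with relations $e_je_k+e_ke_j=-2\delta_{jk}$; $\mathbb{C}_n=\mathbb{R}_{0,n}\otimes\mathbb{C}$. The Dirac operator is $\partial_{\underline{x}}=\sum_{j=1}^n e_j\partial_{x_j}$, acting from the left on Clifford-valued functions, so that $\Delta_n=-\partial_{\underline{x}}^2$ is the Laplacian. For a function $f$, $M^f$ denotes right multiplication by $f$: $M^f g = gf$. *)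

theory Defs
  imports "HOL-Analysis.Analysis"
begin

text \<open>Complex Clifford algebra C_n = R_{0,n} (x) C over the generators e_j, j :: 'n,
  where 'n is a finite linearly ordered index type with n = CARD('n).
  An element is the vector of its coefficients on the basis blades e_A,
  A a subset of the index type (e_A = e_{a1} ... e_{ak} with a1 < ... < ak).\<close>

type_synonym 'n clif = "(complex, 'n set) vec"

definition cl_scalar :: "complex \<Rightarrow> ('n::{finite,linorder}) clif" where
  "cl_scalar c = (\<chi> A. if A = {} then c else 0)"

definition cl_e :: "'n::{finite,linorder} \<Rightarrow> 'n clif" where
  "cl_e j = (\<chi> A. if A = {j} then 1 else 0)"

text \<open>Sign in e_A e_B = cl_sign A B e_{A symmetric-difference B}, using e_j e_k = - e_k e_j
  (j \<noteq> k) and e_j e_j = -1.\<close>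
definition cl_sign :: "'n::{finite,linorder} set \<Rightarrow> 'n set \<Rightarrow> complex" where
  "cl_sign A B = (-1) ^ (card {(a, b). a \<in> A \<and> b \<in> B \<and> b < a} + card (A \<inter> B))"

definition cl_mult :: "'n::{finite,linorder} clif \<Rightarrow> 'n clif \<Rightarrow> 'n clif" where
  "cl_mult x y = (\<chi> C. \<Sum>A\<in>UNIV. \<Sum>B\<in>UNIV.
      if (A - B) \<union> (B - A) = C then cl_sign A B * (x $ A) * (y $ B) else 0)"

definition pd :: "'n::finite \<Rightarrow> (real ^ 'n \<Rightarrow> 'b::real_normed_vector) \<Rightarrow> real ^ 'n \<Rightarrow> 'b" where
  "pd j g x = frechet_derivative g (at x) (axis j 1)"

definition dirac :: "((real, 'n::{finite,linorder}) vec \<Rightarrow> 'n clif) \<Rightarrow> (real, 'n) vec \<Rightarrow> 'n clif" where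
  "dirac g x = (\<Sum>j\<in>UNIV. cl_mult (cl_e j) (pd j g x))"

definition laplacian :: "(real ^ ('n::finite) \<Rightarrow> complex) \<Rightarrow> real ^ 'n \<Rightarrow> complex" where
  "laplacian \<phi> x = (\<Sum>j\<in>UNIV. pd j (\<lambda>y. pd j \<phi> y) x)"

definition twice_differentiable_on :: "(real ^ ('n::finite) \<Rightarrow> complex) \<Rightarrow> (real ^ 'n) set \<Rightarrow> bool" where
  "twice_differentiable_on \<phi> S \<longleftrightarrow>
     \<phi> differentiable_on S \<and> (\<forall>j. (\<lambda>y. pd j \<phi> y) differentiable_on S)"

end

theory Submission
  imports Defs
begin

text \<open>For scalar \<open>\<phi>\<close> the Leibniz rule reads \<open>\<partial>(\<phi> f) = \<phi> \<partial>f + (\<partial>\<phi>) f\<close>, since \<open>\<phi>\<close> commutes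
  with every Clifford number. Expanding the factorised operator therefore gives
  \<open>(\<partial> + M\<^sup>f)(\<partial> - M\<^sup>f)\<phi> = \<partial>\<^sup>2\<phi> - \<phi> (\<partial>f + f\<^sup>2)\<close>: the two cross terms \<open>(\<partial>\<phi>) f\<close> cancel.
  By the symmetry of second partial derivatives and the relations \<open>e\<^sub>j e\<^sub>k + e\<^sub>k e\<^sub>j = -2\<delta>\<^sub>j\<^sub>k\<close>
  one has \<open>\<partial>\<^sup>2\<phi> = -\<Delta>\<phi>\<close>. So the factorisation amounts to \<open>\<phi> v = \<phi> (\<partial>f + f\<^sup>2)\<close> for all \<open>\<phi>\<close>,
  and \<open>\<phi> = 1\<close> shows that this is the Riccati equation \<open>\<partial>f + f\<^sup>2 = v\<close>.\<close>

section \<open>Partial derivatives and their symmetry\<close>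

lemma second_difference_approx:
  fixes \<phi> :: "'a::real_normed_vector \<Rightarrow> 'b::real_normed_vector"
  assumes "open \<Omega>" "x \<in> \<Omega>" "\<phi> differentiable_on \<Omega>"
    and L: "((\<lambda>y. frechet_derivative \<phi> (at y) b) has_derivative L) (at x)"
    and na: "norm a = 1" and nb: "norm b = 1" and e: "e > 0"
  shows "\<exists>d>0. \<forall>h. 0 < h \<and> h < d \<longrightarrow>
     norm (\<phi> (x + h *\<^sub>R a + h *\<^sub>R b) - \<phi> (x + h *\<^sub>R a) - \<phi> (x + h *\<^sub>R b) + \<phi> x - h\<^sup>2 *\<^sub>R L a)
       \<le> e * h\<^sup>2"
proof -
  define \<psi> where "\<psi> y = frechet_derivative \<phi> (at y) b" for y
  obtain d0 where d0: "d0 > 0" "ball x d0 \<subseteq> \<Omega>" using assms(1,2) open_contains_ball by blast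
  have bl: "bounded_linear L" using L has_derivative_bounded_linear by blast
  obtain d1 where d1: "d1 > 0"
    "\<And>y. norm (y - x) < d1 \<Longrightarrow> norm (\<psi> y - \<psi> x - L (y - x)) \<le> e / 3 * norm (y - x)"
    using L e unfolding has_derivative_at_alt \<psi>_def by (meson divide_pos_pos zero_less_numeral)
  have dphi: "(\<phi> has_derivative frechet_derivative \<phi> (at p)) (at p)" if "p \<in> \<Omega>" for p
    using assms(1,3) that by (meson differentiable_on_eq_differentiable_at frechet_derivative_works)
  show ?thesis
  proof (intro exI[of _ "min d0 d1 / 2"] conjI allI impI)
    show "min d0 d1 / 2 > 0" using d0 d1 by simp
    fix h :: real assume h: "0 < h \<and> h < min d0 d1 / 2"
    \<comment> \<open>Mean value theorem for \<open>t \<mapsto> \<phi>(x + h a + t b) - \<phi>(x + t b) - t h L a\<close> on \<open>[0, h]\<close>.\<close>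
    define G where "G t = \<phi> (x + h *\<^sub>R a + t *\<^sub>R b) - \<phi> (x + t *\<^sub>R b) - t *\<^sub>R (h *\<^sub>R L a)" for t
    have norm_le: "norm (s *\<^sub>R a + t *\<^sub>R b) \<le> 2 * h" if "s \<in> {0..h}" "t \<in> {0..h}" for s t
    proof -
      have "norm (s *\<^sub>R a + t *\<^sub>R b) \<le> norm (s *\<^sub>R a) + norm (t *\<^sub>R b)" by (rule norm_triangle_ineq)
      also have "\<dots> = s + t" using that na nb by simp
      finally show ?thesis using that by simp
    qed
    have in_\<Omega>: "x + (s *\<^sub>R a + t *\<^sub>R b) \<in> \<Omega>" if "s \<in> {0..h}" "t \<in> {0..h}" for s t
    proof -
      have "norm (s *\<^sub>R a + t *\<^sub>R b) < d0" using norm_le[OF that] h by simp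
      then have "x + (s *\<^sub>R a + t *\<^sub>R b) \<in> ball x d0"
        by (metis add_diff_cancel_left' dist_commute dist_norm mem_ball)
      then show ?thesis using d0(2) by blast
    qed
    have derG: "(G has_derivative
        (\<lambda>s. s *\<^sub>R (\<psi> (x + h *\<^sub>R a + t *\<^sub>R b) - \<psi> (x + t *\<^sub>R b) - h *\<^sub>R L a))) (at t within {0..h})"
      if t: "t \<in> {0..h}" for t
    proof -
      have p1: "x + h *\<^sub>R a + t *\<^sub>R b \<in> \<Omega>" using in_\<Omega>[of h t] t h by (simp add: add.assoc)
      have p2: "x + t *\<^sub>R b \<in> \<Omega>" using in_\<Omega>[of 0 t] t h by simp
      have along_b: "((\<lambda>t. \<phi> (c + t *\<^sub>R b)) has_derivative (\<lambda>s. s *\<^sub>R \<psi> (c + t *\<^sub>R b)))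
          (at t within {0..h})" if "c + t *\<^sub>R b \<in> \<Omega>" for c
      proof -
        have "((\<lambda>t. c + t *\<^sub>R b) has_derivative (\<lambda>s. s *\<^sub>R b)) (at t within {0..h})"
          by (auto intro!: derivative_eq_intros)
        from has_derivative_in_compose[OF this has_derivative_at_withinI[OF dphi[OF that]]]
        show ?thesis
          using has_derivative_linear[OF dphi[OF that]] by (simp add: o_def \<psi>_def linear_scale)
      qed
      have "((\<lambda>t. t *\<^sub>R (h *\<^sub>R L a)) has_derivative (\<lambda>s. s *\<^sub>R (h *\<^sub>R L a))) (at t within {0..h})"
        by (auto intro!: derivative_eq_intros)
      from has_derivative_diff[OF has_derivative_diff[OF along_b[OF p1] along_b[OF p2]] this]
      show ?thesis unfolding G_def by (simp add: algebra_simps)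
    qed
    have bnd: "onorm (\<lambda>s. s *\<^sub>R (\<psi> (x + h *\<^sub>R a + t *\<^sub>R b) - \<psi> (x + t *\<^sub>R b) - h *\<^sub>R L a)) \<le> e * h"
      if t: "t \<in> {0..h}" for t
    proof (rule onorm_le)
      fix s :: real
      have approx: "norm (\<psi> (x + u) - \<psi> x - L u) \<le> e / 3 * (2 * h)"
        if "u = s' *\<^sub>R a + t *\<^sub>R b" "s' \<in> {0..h}" for u s'
      proof -
        have "norm u < d1" using norm_le[OF that(2) t] h that(1) by simp
        then have "norm (\<psi> (x + u) - \<psi> x - L u) \<le> e / 3 * norm u"
          using d1(2)[of "x + u"] by simp
        also have "\<dots> \<le> e / 3 * (2 * h)" using norm_le[OF that(2) t] that(1) e by simp
        finally show ?thesis .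
      qed
      have A1: "norm (\<psi> (x + (h *\<^sub>R a + t *\<^sub>R b)) - \<psi> x - L (h *\<^sub>R a + t *\<^sub>R b)) \<le> e / 3 * (2 * h)"
        using approx[of _ h] h by simp
      have A2: "norm (\<psi> (x + t *\<^sub>R b) - \<psi> x - L (t *\<^sub>R b)) \<le> e / 3 * h"
      proof -
        have "norm (t *\<^sub>R b) < d1" using t h nb by simp
        then have "norm (\<psi> (x + t *\<^sub>R b) - \<psi> x - L (t *\<^sub>R b)) \<le> e / 3 * norm (t *\<^sub>R b)"
          using d1(2)[of "x + t *\<^sub>R b"] by simp
        also have "\<dots> \<le> e / 3 * h" using t nb e by (intro mult_left_mono) auto
        finally show ?thesis .
      qed
      have "\<psi> (x + h *\<^sub>R a + t *\<^sub>R b) - \<psi> (x + t *\<^sub>R b) - h *\<^sub>R L a =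
          (\<psi> (x + (h *\<^sub>R a + t *\<^sub>R b)) - \<psi> x - L (h *\<^sub>R a + t *\<^sub>R b))
          - (\<psi> (x + t *\<^sub>R b) - \<psi> x - L (t *\<^sub>R b))"
        using linear_add[OF bounded_linear.linear[OF bl]] linear_scale[OF bounded_linear.linear[OF bl]]
        by (simp add: algebra_simps)
      then have "norm (\<psi> (x + h *\<^sub>R a + t *\<^sub>R b) - \<psi> (x + t *\<^sub>R b) - h *\<^sub>R L a) \<le> e * h"
        using order_trans[OF norm_triangle_ineq4 add_mono[OF A1 A2]] by (simp add: algebra_simps)
      then show "norm (s *\<^sub>R (\<psi> (x + h *\<^sub>R a + t *\<^sub>R b) - \<psi> (x + t *\<^sub>R b) - h *\<^sub>R L a)) \<le> e * h * norm s"
        by (simp add: mult_left_mono mult.commute)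
    qed
    have "norm (G h - G 0) \<le> e * h * norm (h - 0)"
      by (rule differentiable_bound[OF convex_real_interval(5) derG bnd]) (use h in auto)
    then show "norm (\<phi> (x + h *\<^sub>R a + h *\<^sub>R b) - \<phi> (x + h *\<^sub>R a) - \<phi> (x + h *\<^sub>R b) + \<phi> x - h\<^sup>2 *\<^sub>R L a)
        \<le> e * h\<^sup>2"
      using h by (simp add: G_def algebra_simps power2_eq_square)
  qed
qed

lemma frechet_derivative_directional_commute:
  fixes \<phi> :: "'a::real_normed_vector \<Rightarrow> 'b::real_normed_vector"
  assumes "open \<Omega>" "x \<in> \<Omega>" "\<phi> differentiable_on \<Omega>" "norm a = 1" "norm b = 1"
    and da: "(\<lambda>y. frechet_derivative \<phi> (at y) a) differentiable (at x)"
    and db: "(\<lambda>y. frechet_derivative \<phi> (at y) b) differentiable (at x)"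
  shows "frechet_derivative (\<lambda>y. frechet_derivative \<phi> (at y) b) (at x) a
       = frechet_derivative (\<lambda>y. frechet_derivative \<phi> (at y) a) (at x) b"
proof -
  define Lb where "Lb = frechet_derivative (\<lambda>y. frechet_derivative \<phi> (at y) b) (at x)"
  define La where "La = frechet_derivative (\<lambda>y. frechet_derivative \<phi> (at y) a) (at x)"
  have close: "norm (Lb a - La b) \<le> 2 * e" if e: "e > 0" for e
  proof -
    define \<Delta> where "\<Delta> h = \<phi> (x + h *\<^sub>R a + h *\<^sub>R b) - \<phi> (x + h *\<^sub>R a) - \<phi> (x + h *\<^sub>R b) + \<phi> x" for h
    have \<Delta>_swap: "\<phi> (x + h *\<^sub>R b + h *\<^sub>R a) - \<phi> (x + h *\<^sub>R b) - \<phi> (x + h *\<^sub>R a) + \<phi> x = \<Delta> h" for h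
      unfolding \<Delta>_def by (simp add: add.commute add.left_commute diff_right_commute)
    obtain d1 where d1: "d1 > 0" "\<And>h. 0 < h \<and> h < d1 \<Longrightarrow> norm (\<Delta> h - h\<^sup>2 *\<^sub>R Lb a) \<le> e * h\<^sup>2"
      using second_difference_approx[OF assms(1-3) db[unfolded frechet_derivative_works] assms(4,5) e]
      unfolding Lb_def \<Delta>_def by blast
    obtain d2 where d2: "d2 > 0" "\<And>h. 0 < h \<and> h < d2 \<Longrightarrow> norm (\<Delta> h - h\<^sup>2 *\<^sub>R La b) \<le> e * h\<^sup>2"
      using second_difference_approx[OF assms(1-3) da[unfolded frechet_derivative_works] assms(5,4) e]
      unfolding La_def \<Delta>_swap by blast
    define h where "h = min d1 d2 / 2"
    have h: "0 < h" "h < d1" "h < d2" using d1 d2 by (auto simp: h_def)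
    have "(\<Delta> h - h\<^sup>2 *\<^sub>R La b) - (\<Delta> h - h\<^sup>2 *\<^sub>R Lb a) = h\<^sup>2 *\<^sub>R (Lb a - La b)"
      by (simp add: scaleR_diff_right)
    then have "h\<^sup>2 * norm (Lb a - La b) = norm ((\<Delta> h - h\<^sup>2 *\<^sub>R La b) - (\<Delta> h - h\<^sup>2 *\<^sub>R Lb a))"
      by simp
    also have "\<dots> \<le> e * h\<^sup>2 + e * h\<^sup>2"
      using order_trans[OF norm_triangle_ineq4 add_mono[OF d2(2)[of h] d1(2)[of h]]] h by simp
    finally show ?thesis using h(1) by (simp add: mult.commute mult.left_commute)
  qed
  have "norm (Lb a - La b) \<le> 0"
    by (rule field_le_epsilon) (metis add_0 close field_sum_of_halves half_gt_zero mult_2)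
  then show ?thesis unfolding Lb_def La_def by simp
qed

lemma pd_eq_derivative: "(g has_derivative D) (at x) \<Longrightarrow> pd j g x = D (axis j 1)"
  unfolding pd_def using frechet_derivative_at by metis

lemma pd_cong_open:
  assumes "open \<Omega>" "x \<in> \<Omega>" "\<And>y. y \<in> \<Omega> \<Longrightarrow> g y = g' y"
  shows "pd j g x = pd j g' x"
proof -
  have "(g has_derivative D) (at x) \<longleftrightarrow> (g' has_derivative D) (at x)" for D
    using has_derivative_transform_within_open[OF _ assms(1,2)] assms(3) by metis
  then show ?thesis unfolding pd_def frechet_derivative_def by simp
qed

lemma pd_commute:
  fixes \<phi> :: "real ^ 'n::finite \<Rightarrow> 'b::real_normed_vector"
  assumes "open \<Omega>" "x \<in> \<Omega>" "\<phi> differentiable_on \<Omega>"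
    and "pd j \<phi> differentiable (at x)" "pd k \<phi> differentiable (at x)"
  shows "pd j (pd k \<phi>) x = pd k (pd j \<phi>) x"
  using frechet_derivative_directional_commute[OF assms(1-3), of "axis j 1" "axis k 1"] assms(4,5)
  unfolding pd_def[abs_def] by simp

lemma twice_differentiable_on_const: "twice_differentiable_on (\<lambda>_. c) \<Omega>"
proof -
  have pd_const: "pd j (\<lambda>_. c) = (\<lambda>_. 0)" for j
    by (rule ext) (simp add: pd_eq_derivative[OF has_derivative_const])
  show ?thesis unfolding twice_differentiable_on_def by (simp add: pd_const)
qed

section \<open>Clifford algebra arithmetic\<close>

definition cl_scale :: "complex \<Rightarrow> ('n::{finite,linorder}) clif \<Rightarrow> 'n clif" where
  "cl_scale c y = (\<chi> A. c * y $ A)"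

lemma cl_mult_nth: "cl_mult x y $ C = (\<Sum>A\<in>UNIV. \<Sum>B\<in>UNIV.
    (if (A - B) \<union> (B - A) = C then cl_sign A B else 0) * (x $ A) * (y $ B))"
  unfolding cl_mult_def by (auto intro!: sum.cong)

lemma bounded_bilinear_cl_mult: "bounded_bilinear cl_mult"
  unfolding bilinear_conv_bounded_bilinear[symmetric] bilinear_def
  by (auto intro!: linearI simp: vec_eq_iff cl_mult_nth algebra_simps sum.distrib sum_distrib_left
      vector_scaleR_component scaleR_sum_right)

lemma bounded_bilinear_cl_scale: "bounded_bilinear cl_scale"
  unfolding bilinear_conv_bounded_bilinear[symmetric] bilinear_def
  by (auto intro!: linearI simp: vec_eq_iff cl_scale_def algebra_simps vector_scaleR_component)

interpretation cl_mult: bounded_bilinear cl_mult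
  by (rule bounded_bilinear_cl_mult)

interpretation cl_scale: bounded_bilinear cl_scale
  by (rule bounded_bilinear_cl_scale)

lemma cl_scale_one [simp]: "cl_scale 1 x = x"
  by (simp add: vec_eq_iff cl_scale_def)

lemma cl_mult_scale_left: "cl_mult (cl_scale c x) y = cl_scale c (cl_mult x y)"
  by (simp add: vec_eq_iff cl_mult_nth cl_scale_def sum_distrib_left algebra_simps)

lemma cl_mult_scale_right: "cl_mult x (cl_scale c y) = cl_scale c (cl_mult x y)"
  by (simp add: vec_eq_iff cl_mult_nth cl_scale_def sum_distrib_left algebra_simps)

lemma cl_sign_empty_left: "cl_sign {} B = 1"
  by (simp add: cl_sign_def)

lemma cl_sign_empty_right: "cl_sign A {} = 1"
  by (simp add: cl_sign_def)

lemma cl_mult_scalar_left: "cl_mult (cl_scalar c) y = cl_scale c y"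
proof -
  have "cl_mult (cl_scalar c) y $ C = (\<Sum>A\<in>UNIV. if A = {} then (\<Sum>B\<in>UNIV.
      (if (A - B) \<union> (B - A) = C then cl_sign A B else 0) * c * (y $ B)) else 0)" for C
    unfolding cl_mult_nth by (intro sum.cong) (auto simp: cl_scalar_def)
  also have "\<dots> C = c * y $ C" for C
    by (simp add: cl_sign_empty_left if_distrib if_distribR cong: if_cong)
  finally show ?thesis by (simp add: vec_eq_iff cl_scale_def)
qed

lemma cl_mult_scalar_right: "cl_mult y (cl_scalar c) = cl_scale c y"
proof -
  have "cl_mult y (cl_scalar c) $ C = (\<Sum>A\<in>UNIV. \<Sum>B\<in>UNIV. if B = {} then
      (if (A - B) \<union> (B - A) = C then cl_sign A B else 0) * (y $ A) * c else 0)" for C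
    unfolding cl_mult_nth by (intro sum.cong) (auto simp: cl_scalar_def)
  also have "\<dots> C = c * y $ C" for C
    by (simp add: cl_sign_empty_right mult.commute cong: if_cong) (simp add: if_distrib if_distribR cong: if_cong)
  finally show ?thesis by (simp add: vec_eq_iff cl_scale_def)
qed

lemma cl_mult_cl_e:
  "cl_mult (cl_e j) (cl_e k) = (\<chi> C. if ({j} - {k}) \<union> ({k} - {j}) = C then cl_sign {j} {k} else 0)"
proof -
  have times_indicator: "x * (if P then 1 else 0) = (if P then x else 0)"
    and indicator_times: "(if P then x else 0) * y = (if P then x * y else 0)" for P and x y :: complex
    by simp_all
  have "(\<Sum>A\<in>UNIV. \<Sum>B\<in>UNIV. F A B * (if A = {j} then 1 else 0) * (if B = {k} then 1 else 0))
      = (F {j} {k} :: complex)" for F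
    by (simp only: times_indicator indicator_times, simp)
  from this[of "\<lambda>A B. if (A - B) \<union> (B - A) = C then cl_sign A B else 0" for C]
  show ?thesis unfolding vec_eq_iff cl_mult_nth cl_e_def by simp
qed

lemma cl_sign_same_singleton: "cl_sign {j} {j} = -1"
proof -
  have "card {(a, b). a \<in> {j} \<and> b \<in> {j} \<and> b < a} = 0" by (auto simp: card_eq_0_iff)
  then show ?thesis unfolding cl_sign_def by (simp only: \<open>card _ = 0\<close>) simp
qed

lemma cl_sign_distinct_singletons: "j \<noteq> k \<Longrightarrow> cl_sign {j} {k} = (if k < j then -1 else 1)"
proof -
  assume "j \<noteq> k"
  have "{(a, b). a \<in> {j} \<and> b \<in> {k} \<and> b < a} = (if k < j then {(j, k)} else {})" by auto
  then show ?thesis using \<open>j \<noteq> k\<close> by (simp add: cl_sign_def)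
qed

lemma cl_e_anticommute:
  "cl_mult (cl_e j) (cl_e k) + cl_mult (cl_e k) (cl_e j) = (if j = k then cl_scalar (-2) else 0)"
proof (cases "j = k")
  case True
  then show ?thesis by (simp add: cl_mult_cl_e cl_sign_same_singleton cl_scalar_def vec_eq_iff)
next
  case False
  then show ?thesis by (auto simp: cl_mult_cl_e cl_sign_distinct_singletons vec_eq_iff insert_commute)
qed

lemma sum_symmetric_cl_e_products:
  assumes "\<And>j k. s j k = s k j"
  shows "(\<Sum>j\<in>UNIV. \<Sum>k\<in>UNIV. cl_scale (s j k) (cl_mult (cl_e j) (cl_e (k::'n::{finite,linorder}))))
       = cl_scalar (- (\<Sum>j\<in>UNIV. s j j))"
proof -
  define S where "S = (\<Sum>j\<in>UNIV. \<Sum>k\<in>UNIV. cl_scale (s j k) (cl_mult (cl_e j) (cl_e (k::'n))))"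
  have swapped: "S = (\<Sum>j\<in>UNIV. \<Sum>k\<in>UNIV. cl_scale (s j k) (cl_mult (cl_e k) (cl_e j)))"
    unfolding S_def by (subst sum.swap) (simp add: assms)
  have "S + S = (\<Sum>j\<in>UNIV. \<Sum>k\<in>UNIV. cl_scale (s j k) (cl_mult (cl_e j) (cl_e k) + cl_mult (cl_e k) (cl_e j)))"
    by (subst (2) swapped) (simp add: S_def sum.distrib[symmetric] cl_scale.add_right)
  also have "\<dots> = (\<Sum>j\<in>UNIV. \<Sum>k\<in>UNIV. if j = k then cl_scale (s j k) (cl_scalar (-2)) else 0)"
    by (simp add: cl_e_anticommute cl_scale.zero_right if_distrib cong: if_cong)
  also have "\<dots> = (\<Sum>j\<in>UNIV. cl_scale (s j j) (cl_scalar (-2)))"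
    by simp
  also have "\<dots> = cl_scalar (- (\<Sum>j\<in>UNIV. s j j)) + cl_scalar (- (\<Sum>j\<in>UNIV. s j j))"
  proof -
    have "(\<Sum>j\<in>UNIV. - (s j j * 2)) = - (2 * (\<Sum>j\<in>UNIV. s j j))"
      by (simp add: sum_negf sum_distrib_left mult.commute)
    then show ?thesis by (simp add: vec_eq_iff cl_scale_def cl_scalar_def)
  qed
  finally have "(2::real) *\<^sub>R S = 2 *\<^sub>R cl_scalar (- (\<Sum>j\<in>UNIV. s j j))" by (simp add: scaleR_2)
  then show ?thesis unfolding S_def by simp
qed

section \<open>The Dirac operator on scalar functions\<close>

definition cl_grad :: "((real, 'n::{finite,linorder}) vec \<Rightarrow> complex) \<Rightarrow> (real, 'n) vec \<Rightarrow> 'n clif" where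
  "cl_grad \<phi> y = (\<Sum>k\<in>UNIV. cl_scale (pd k \<phi> y) (cl_e k))"

lemma pd_diff:
  assumes "g differentiable (at x)" "h differentiable (at x)"
  shows "pd j (\<lambda>y. g y - h y) x = pd j g x - pd j h x"
  unfolding pd_def[of j g] pd_def[of j h]
  by (rule pd_eq_derivative[OF has_derivative_diff[OF assms[unfolded frechet_derivative_works]]])

lemma has_derivative_cl_scale:
  assumes "(\<phi> has_derivative D\<phi>) (at x)" "(g has_derivative Dg) (at x)"
  shows "((\<lambda>y. cl_scale (\<phi> y) (g y)) has_derivative
      (\<lambda>h. cl_scale (\<phi> x) (Dg h) + cl_scale (D\<phi> h) (g x))) (at x)"
  using cl_scale.FDERIV[OF assms] .

lemma pd_cl_scale:
  assumes "\<phi> differentiable (at x)" "g differentiable (at x)"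
  shows "pd j (\<lambda>y. cl_scale (\<phi> y) (g y)) x = cl_scale (\<phi> x) (pd j g x) + cl_scale (pd j \<phi> x) (g x)"
  unfolding pd_def[of j \<phi>] pd_def[of j g]
  by (rule pd_eq_derivative[OF has_derivative_cl_scale[OF assms[unfolded frechet_derivative_works]]])

lemma dirac_cong_open:
  assumes "open \<Omega>" "x \<in> \<Omega>" "\<And>y. y \<in> \<Omega> \<Longrightarrow> g y = g' y"
  shows "dirac g x = dirac g' x"
  unfolding dirac_def using pd_cong_open[OF assms] by simp

lemma dirac_diff:
  assumes "g differentiable (at x)" "h differentiable (at x)"
  shows "dirac (\<lambda>y. g y - h y) x = dirac g x - dirac h x"
  unfolding dirac_def pd_diff[OF assms] cl_mult.diff_right by (rule sum_subtractf)

lemma dirac_cl_scalar: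
  fixes \<phi> :: "(real, 'n::{finite,linorder}) vec \<Rightarrow> complex"
  assumes "\<phi> differentiable (at y)"
  shows "dirac (\<lambda>z. cl_scalar (\<phi> z)) y = cl_grad \<phi> y"
proof -
  have "bounded_linear (cl_scalar :: complex \<Rightarrow> 'n clif)"
    by (auto intro!: bounded_linearI' simp: vec_eq_iff cl_scalar_def vector_scaleR_component)
  from bounded_linear.has_derivative[OF this assms[unfolded frechet_derivative_works]]
  have "pd k (\<lambda>z. cl_scalar (\<phi> z) :: 'n clif) y = cl_scalar (pd k \<phi> y)" for k
    unfolding pd_def[of k \<phi>] by (rule pd_eq_derivative)
  then show ?thesis by (simp add: dirac_def cl_grad_def cl_mult_scalar_right)
qed

lemma dirac_cl_scale:
  assumes "\<phi> differentiable (at x)" "g differentiable (at x)"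
  shows "dirac (\<lambda>y. cl_scale (\<phi> y) (g y)) x = cl_scale (\<phi> x) (dirac g x) + cl_mult (cl_grad \<phi> x) (g x)"
  by (simp add: dirac_def cl_grad_def pd_cl_scale[OF assms] cl_mult.add_right cl_mult.sum_left
      cl_mult_scale_left cl_mult_scale_right cl_scale.sum_right sum.distrib)

lemma has_derivative_cl_grad:
  assumes "\<And>k. pd k \<phi> differentiable (at x)"
  shows "(cl_grad \<phi> has_derivative
      (\<lambda>h. \<Sum>k\<in>UNIV. cl_scale (frechet_derivative (pd k \<phi>) (at x) h) (cl_e k))) (at x)"
  unfolding cl_grad_def[abs_def]
  using has_derivative_cl_scale[OF assms[unfolded frechet_derivative_works] has_derivative_const]
  by (intro has_derivative_sum) (simp add: cl_scale.zero_right)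

lemma dirac_cl_grad:
  assumes "open \<Omega>" "x \<in> \<Omega>" "twice_differentiable_on \<phi> \<Omega>"
  shows "dirac (cl_grad \<phi>) x = cl_scalar (- laplacian \<phi> x)"
proof -
  have pd_differentiable: "pd k \<phi> differentiable (at x)" for k
    using assms unfolding twice_differentiable_on_def by (meson differentiable_on_eq_differentiable_at)
  have "pd j (cl_grad \<phi>) x = (\<Sum>k\<in>UNIV. cl_scale (pd j (pd k \<phi>) x) (cl_e k))" for j
    unfolding pd_def[of j "pd k \<phi>" for k] by (rule pd_eq_derivative[OF has_derivative_cl_grad[OF pd_differentiable]])
  then have "dirac (cl_grad \<phi>) x
      = (\<Sum>j\<in>UNIV. \<Sum>k\<in>UNIV. cl_scale (pd j (pd k \<phi>) x) (cl_mult (cl_e j) (cl_e k)))"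
    by (simp add: dirac_def cl_mult.sum_right cl_mult_scale_right)
  also have "\<dots> = cl_scalar (- laplacian \<phi> x)"
    unfolding laplacian_def
  proof (rule sum_symmetric_cl_e_products)
    show "pd j (pd k \<phi>) x = pd k (pd j \<phi>) x" for j k
      using assms(3) unfolding twice_differentiable_on_def
      by (intro pd_commute[OF assms(1,2) _ pd_differentiable pd_differentiable]) blast
  qed
  finally show ?thesis .
qed

lemma dirac_factorisation:
  fixes \<phi> :: "(real, 'n::{finite,linorder}) vec \<Rightarrow> complex" and f :: "(real, 'n) vec \<Rightarrow> 'n clif"
  assumes "open \<Omega>" "x \<in> \<Omega>" "twice_differentiable_on \<phi> \<Omega>" "f differentiable_on \<Omega>"
  shows "dirac (\<lambda>y. dirac (\<lambda>z. cl_scalar (\<phi> z)) y - cl_mult (cl_scalar (\<phi> y)) (f y)) x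
         + cl_mult (dirac (\<lambda>z. cl_scalar (\<phi> z)) x - cl_mult (cl_scalar (\<phi> x)) (f x)) (f x)
       = cl_scalar (- laplacian \<phi> x) - cl_scale (\<phi> x) (dirac f x + cl_mult (f x) (f x))"
proof -
  have \<phi>_differentiable: "\<phi> differentiable (at y)" if "y \<in> \<Omega>" for y
    using assms(1,3) that unfolding twice_differentiable_on_def
    by (meson differentiable_on_eq_differentiable_at)
  have f_differentiable: "f differentiable (at x)"
    using assms(1,2,4) by (meson differentiable_on_eq_differentiable_at)
  have grad_differentiable: "cl_grad \<phi> differentiable (at x)"
    using assms(1-3) unfolding twice_differentiable_on_def differentiable_def
    by (meson differentiable_on_eq_differentiable_at differentiable_def has_derivative_cl_grad)
  have product_differentiable: "(\<lambda>y. cl_scale (\<phi> y) (f y)) differentiable (at x)"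
    using has_derivative_cl_scale \<phi>_differentiable[OF assms(2)] f_differentiable
    unfolding differentiable_def by blast
  have "dirac (\<lambda>y. dirac (\<lambda>z. cl_scalar (\<phi> z)) y - cl_mult (cl_scalar (\<phi> y)) (f y)) x
      = dirac (\<lambda>y. cl_grad \<phi> y - cl_scale (\<phi> y) (f y)) x"
    by (rule dirac_cong_open[OF assms(1,2)]) (simp add: dirac_cl_scalar \<phi>_differentiable cl_mult_scalar_left)
  also have "\<dots> = dirac (cl_grad \<phi>) x - dirac (\<lambda>y. cl_scale (\<phi> y) (f y)) x"
    by (rule dirac_diff[OF grad_differentiable product_differentiable])
  also have "\<dots> = cl_scalar (- laplacian \<phi> x) - (cl_scale (\<phi> x) (dirac f x) + cl_mult (cl_grad \<phi> x) (f x))"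
    by (simp add: dirac_cl_grad[OF assms(1-3)] dirac_cl_scale \<phi>_differentiable[OF assms(2)] f_differentiable)
  moreover have "cl_mult (dirac (\<lambda>z. cl_scalar (\<phi> z)) x - cl_mult (cl_scalar (\<phi> x)) (f x)) (f x)
      = cl_mult (cl_grad \<phi> x) (f x) - cl_scale (\<phi> x) (cl_mult (f x) (f x))"
    by (simp add: dirac_cl_scalar \<phi>_differentiable[OF assms(2)] cl_mult_scalar_left cl_mult.diff_left
        cl_mult_scale_left)
  ultimately show ?thesis by (simp add: cl_scale.add_right)
qed

theorem proposition3p1:
  fixes \<Omega> :: "((real, 'n::{finite,linorder}) vec) set"
    and v :: "(real, 'n) vec \<Rightarrow> complex"
    and f :: "(real, 'n) vec \<Rightarrow> 'n clif"
  assumes "open \<Omega>" and "CARD('n) > 1" and "f differentiable_on \<Omega>"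
  shows "(\<forall>\<phi>. twice_differentiable_on \<phi> \<Omega> \<longrightarrow>
            (\<forall>x\<in>\<Omega>. cl_scalar (- laplacian \<phi> x - v x * \<phi> x) =
               dirac (\<lambda>y. dirac (\<lambda>z. cl_scalar (\<phi> z)) y - cl_mult (cl_scalar (\<phi> y)) (f y)) x
               + cl_mult (dirac (\<lambda>z. cl_scalar (\<phi> z)) x - cl_mult (cl_scalar (\<phi> x)) (f x)) (f x)))
         \<longleftrightarrow> (\<forall>x\<in>\<Omega>. dirac f x + cl_mult (f x) (f x) = cl_scalar (v x))"
proof -
  have factorisation_iff:
    "cl_scalar (- laplacian \<phi> x - v x * \<phi> x) =
       dirac (\<lambda>y. dirac (\<lambda>z. cl_scalar (\<phi> z)) y - cl_mult (cl_scalar (\<phi> y)) (f y)) x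
       + cl_mult (dirac (\<lambda>z. cl_scalar (\<phi> z)) x - cl_mult (cl_scalar (\<phi> x)) (f x)) (f x)
     \<longleftrightarrow> cl_scale (\<phi> x) (dirac f x + cl_mult (f x) (f x)) = cl_scale (\<phi> x) (cl_scalar (v x))"
    if "twice_differentiable_on \<phi> \<Omega>" "x \<in> \<Omega>" for \<phi> x
  proof -
    have "cl_scalar (- laplacian \<phi> x - v x * \<phi> x)
        = cl_scalar (- laplacian \<phi> x) - cl_scale (\<phi> x) (cl_scalar (v x))"
      by (simp add: vec_eq_iff cl_scalar_def cl_scale_def)
    then show ?thesis using dirac_factorisation[OF assms(1) that(2,1) assms(3)] by auto
  qed
  show ?thesis
  proof
    assume "\<forall>\<phi>. twice_differentiable_on \<phi> \<Omega> \<longrightarrow> (\<forall>x\<in>\<Omega>. cl_scalar (- laplacian \<phi> x - v x * \<phi> x) =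
        dirac (\<lambda>y. dirac (\<lambda>z. cl_scalar (\<phi> z)) y - cl_mult (cl_scalar (\<phi> y)) (f y)) x
        + cl_mult (dirac (\<lambda>z. cl_scalar (\<phi> z)) x - cl_mult (cl_scalar (\<phi> x)) (f x)) (f x))"
    from this[rule_format, OF twice_differentiable_on_const[of 1]]
    show "\<forall>x\<in>\<Omega>. dirac f x + cl_mult (f x) (f x) = cl_scalar (v x)"
      using factorisation_iff[OF twice_differentiable_on_const[of 1]] by simp
  qed (use factorisation_iff in simp)
qed

end
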